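(* Let $\Gamma$ be a flat Type $\mathcal A$ connection which is strongly linearly projectively equivalent to $\Gamma_i^0$ for some $0\le i\le 5$ (i.e. $\Gamma={}^L\Gamma_i^0$ for some real linear function $L$). Then one of the following holds: (1) $\Gamma=\Gamma_i^0$; (2) $i=1$, $\mathcal Q(\Gamma)=\mathrm{Span}\{e^{-x^1},\mathbb 1,x^2\}$, and $T(x^1,x^2)=(x^2,-x^1)$ intertwines $\Gamma$ and $\Gamma_3^0$; (3) $i=2$, $\mathcal Q(\Gamma)=\mathrm{Span}\{e^{x^1},\mathbb 1,e^{x^2+x^1}\}$, and $T(x^1,x^2)=(-x^1,x^1+x^2)$ intertwines $\Gamma$ and $\Gamma_2^0$; (4) $i=2$, $\mathcal Q(\Gamma)=\mathrm{Span}\{e^{-x^2},e^{-x^1-x^2},\mathbb 1\}$, and $T(x^1,x^2)=(x^2,-x^1-x^2)$ intertwines $\Gamma$ and $\Gamma_2^0$; (5) $i=3$, $\mathcal Q(\Gamma)=\mathrm{Span}\{e^{-x^2},x^1e^{-x^2},\mathbb 1\}$, and $T(x^1,x^2)=(-x^2,x^1)$ intertwines $\Gamma$ and $\Gamma_1^0$.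
   Context: A torsion-free connection has Christoffel symbols $\nabla_{\partial_{x^i}}\partial_{x^j}=\Gamma_{ij}^k\partial_{x^k}$; curvature $R(X,Y)Z=\nabla_X\nabla_YZ-\nabla_Y\nabla_XZ-\nabla_{[X,Y]}Z$, Ricci tensor $\rho(Y,Z)=\mathrm{Tr}(X\mapsto R(X,Y)Z)$, $\rho_s$ its symmetrization. Hessian $\mathcal H_\nabla f=(\partial_{x^i}\partial_{x^j}f-\Gamma_{ij}^k\partial_{x^k}f)dx^i\otimes dx^j$; on a surface $\mathcal Q(\Gamma)=\{f\in C^\infty(\mathbb R^2):\mathcal H_\nabla f+f\rho_s=0\}$. $\mathbb 1$ denotes the constant function $1$. For real constants, $\Gamma(a,b,c,d,e,f)$ denotes the connection on $\mathbb R^2$ with constant Christoffel symbols $\Gamma_{11}^1=a$, $\Gamma_{11}^2=b$, $\Gamma_{12}^1=\Gamma_{21}^1=c$, $\Gamma_{12}^2=\Gamma_{21}^2=d$, $\Gamma_{22}^1=e$, $\Gamma_{22}^2=f$ (Type $\mathcal A$ connections). For $g$ smooth, ${}^g\nabla_XY:=\nabla_XY+X(g)Y+Y(g)X$; for a linear function $L=a_1x^1+a_2x^2$, ${}^L\Gamma(a,b,c,d,e,f)=\Gamma(a+2a_1,b,c+a_2,d+a_1,e,f+2a_2)$; two Type $\mathcal A$ connections $\nabla,\tilde\nabla$ are strongly linearly projectively equivalent if $\tilde\nabla={}^L\nabla$ for some such $L$. "$T$ intertwines $\Gamma$ and $\Gamma'$" means $T^*\Gamma'=\Gamma$. The flat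 connections: $\Gamma_0^0=\Gamma(0,0,0,0,0,0)$, $\Gamma_1^0=\Gamma(1,0,0,1,0,0)$, $\Gamma_2^0=\Gamma(-1,0,0,0,0,1)$, $\Gamma_3^0=\Gamma(0,0,0,0,0,1)$, $\Gamma_4^0=\Gamma(0,0,0,0,1,0)$, $\Gamma_5^0=\Gamma(1,0,0,1,-1,0)$. *)

theory Defs
  imports "HOL-Analysis.Analysis"
begin

text \<open>A Type A connection on R^2 is represented by its (constant) Christoffel symbols
  C i j k = Gamma_ij^k, indices i j k in {1,2}; all values outside {1,2} are 0.
  Points of R^2 are pairs (x1, x2) :: real * real.\<close>

type_synonym conn = "nat \<Rightarrow> nat \<Rightarrow> nat \<Rightarrow> real"

definition idx :: "nat set" where "idx = {1, 2}"

definition GammaA :: "real \<Rightarrow> real \<Rightarrow> real \<Rightarrow> real \<Rightarrow> real \<Rightarrow> real \<Rightarrow> conn" where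
  "GammaA a b c d e f i j k =
     (if (i, j, k) = (1, 1, 1) then a
      else if (i, j, k) = (1, 1, 2) then b
      else if (i, j, k) = (1, 2, 1) \<or> (i, j, k) = (2, 1, 1) then c
      else if (i, j, k) = (1, 2, 2) \<or> (i, j, k) = (2, 1, 2) then d
      else if (i, j, k) = (2, 2, 1) then e
      else if (i, j, k) = (2, 2, 2) then f
      else 0)"

definition Gamma0 :: "nat \<Rightarrow> conn" where
  "Gamma0 i =
     (if i = 0 then GammaA 0 0 0 0 0 0
      else if i = 1 then GammaA 1 0 0 1 0 0
      else if i = 2 then GammaA (-1) 0 0 0 0 1
      else if i = 3 then GammaA 0 0 0 0 0 1
      else if i = 4 then GammaA 0 0 0 0 1 0
      else GammaA 1 0 0 1 (-1) 0)"

text \<open>Curvature R(d_i,d_j)d_k = R i j k l d_l for constant Christoffel symbols.\<close>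
definition curv :: "conn \<Rightarrow> nat \<Rightarrow> nat \<Rightarrow> nat \<Rightarrow> nat \<Rightarrow> real" where
  "curv G i j k l = (\<Sum>m\<in>idx. G j k m * G i m l - G i k m * G j m l)"

definition flat :: "conn \<Rightarrow> bool" where
  "flat G \<longleftrightarrow> (\<forall>i\<in>idx. \<forall>j\<in>idx. \<forall>k\<in>idx. \<forall>l\<in>idx. curv G i j k l = 0)"

definition ricci :: "conn \<Rightarrow> nat \<Rightarrow> nat \<Rightarrow> real" where
  "ricci G j k = (\<Sum>i\<in>idx. curv G i j k i)"

definition ricci_s :: "conn \<Rightarrow> nat \<Rightarrow> nat \<Rightarrow> real" where
  "ricci_s G j k = (ricci G j k + ricci G k j) / 2"

text \<open>Linear projective modification by L = a1 x^1 + a2 x^2: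
  (^L nabla)_X Y = nabla_X Y + X(L) Y + Y(L) X.\<close>
definition kdelta :: "nat \<Rightarrow> nat \<Rightarrow> real" where
  "kdelta j k = (if j = k \<and> j \<in> idx then 1 else 0)"

definition lincoef :: "real \<Rightarrow> real \<Rightarrow> nat \<Rightarrow> real" where
  "lincoef a1 a2 i = (if i = 1 then a1 else if i = 2 then a2 else 0)"

definition Lmod :: "real \<Rightarrow> real \<Rightarrow> conn \<Rightarrow> conn" where
  "Lmod a1 a2 G i j k = G i j k + lincoef a1 a2 i * kdelta j k + lincoef a1 a2 j * kdelta i k"

definition evec :: "nat \<Rightarrow> real \<times> real" where
  "evec i = (if i = 1 then (1, 0) else if i = 2 then (0, 1) else (0, 0))"

definition pd :: "nat \<Rightarrow> (real \<times> real \<Rightarrow> real) \<Rightarrow> (real \<times> real \<Rightarrow> real)" where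
  "pd i f = (\<lambda>x. frechet_derivative f (at x) (evec i))"

definition iter_pd :: "nat list \<Rightarrow> (real \<times> real \<Rightarrow> real) \<Rightarrow> (real \<times> real \<Rightarrow> real)" where
  "iter_pd is f = foldr pd is f"

definition smooth2 :: "(real \<times> real \<Rightarrow> real) \<Rightarrow> bool" where
  "smooth2 f \<longleftrightarrow> (\<forall>is. set is \<subseteq> idx \<longrightarrow> iter_pd is f differentiable_on UNIV)"

text \<open>Q(Gamma) = { f smooth : Hess f + f rho_s = 0 }.\<close>
definition Qsp :: "conn \<Rightarrow> (real \<times> real \<Rightarrow> real) set" where
  "Qsp G = {f. smooth2 f \<and>
     (\<forall>x. \<forall>i\<in>idx. \<forall>j\<in>idx.
        pd i (pd j f) x - (\<Sum>k\<in>idx. G i j k * pd k f x) + f x * ricci_s G i j = 0)}"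

definition span3 :: "(real \<times> real \<Rightarrow> real) \<Rightarrow> (real \<times> real \<Rightarrow> real) \<Rightarrow> (real \<times> real \<Rightarrow> real)
    \<Rightarrow> (real \<times> real \<Rightarrow> real) set" where
  "span3 f g h = {u. \<exists>a b c. u = (\<lambda>x. a * f x + b * g x + c * h x)}"

text \<open>T intertwines G and G' (T^* G' = G), for a linear isomorphism T of R^2 with
  matrix A (T x = A x, A a i = entry in row a, column i).  For constant
  coordinate frames the condition T_*(nabla_X Y) = nabla'_{T_*X} T_*Y reads
  sum_k G_ij^k A^c_k = sum_{a,b} A^a_i A^b_j G'_ab^c.\<close>
definition intertwines :: "(real \<times> real \<Rightarrow> real \<times> real) \<Rightarrow> conn \<Rightarrow> conn \<Rightarrow> bool" where
  "intertwines T G G' \<longleftrightarrow>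
     (\<exists>A :: nat \<Rightarrow> nat \<Rightarrow> real.
        A 1 1 * A 2 2 - A 1 2 * A 2 1 \<noteq> 0 \<and>
        (\<forall>x1 x2. T (x1, x2) = (A 1 1 * x1 + A 1 2 * x2, A 2 1 * x1 + A 2 2 * x2)) \<and>
        (\<forall>i\<in>idx. \<forall>j\<in>idx. \<forall>c\<in>idx.
           (\<Sum>k\<in>idx. G i j k * A c k) = (\<Sum>a\<in>idx. \<Sum>b\<in>idx. A a i * A b j * G' a b c)))"

end

theory Submission
  imports Defs
begin

text \<open>
  For \<open>L = a\<^sub>1 x\<^sup>1 + a\<^sub>2 x\<^sup>2\<close> the modified connection \<open>\<^sup>L\<Gamma>\<^sub>i\<^sup>0\<close> has constant
  Christoffel symbols, and its flatness amounts to three quadratic equations in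
  \<open>(a\<^sub>1, a\<^sub>2)\<close>. Solving them for each \<open>\<Gamma>\<^sub>i\<^sup>0\<close> leaves, besides \<open>L = 0\<close>, only
  \<open>L = -x\<^sup>1\<close> for \<open>i = 1\<close>, \<open>L = x\<^sup>1\<close> and \<open>L = -x\<^sup>2\<close> for \<open>i = 2\<close>, and \<open>L = -x\<^sup>2\<close> for
  \<open>i = 3\<close>. For a flat connection the Ricci tensor vanishes, so \<open>\<Q>(\<Gamma>)\<close> is the solution
  space of the linear system \<open>\<partial>\<^sub>i\<partial>\<^sub>j f = \<Gamma>\<^sub>i\<^sub>j\<^sup>k \<partial>\<^sub>k f\<close>. In the four exceptional cases
  this system is integrated explicitly: suitable functions \<open>g\<close> built from first derivatives
  satisfy \<open>\<nabla>g = g \<nabla>h\<close> for a linear \<open>h\<close>, hence \<open>g = C e\<^sup>h\<close>, and then \<open>f\<close> is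
  determined up to a constant. The intertwining maps are checked directly on the
  Christoffel symbols.
\<close>

lemma pd_eq_derivative: "(u has_derivative D) (at x) \<Longrightarrow> pd i u x = D (evec i)"
  unfolding pd_def by (metis frechet_derivative_at)

lemmas has_frechet_derivative = frechet_derivative_works[THEN iffD1]

lemma differentiable_exp_compose [derivative_intros]:
  "u differentiable (at x) \<Longrightarrow> (\<lambda>y. exp (u y :: real)) differentiable (at x)"
  unfolding differentiable_def using has_derivative_exp by blast

lemma differentiable_fst [derivative_intros]: "fst differentiable F"
  unfolding differentiable_def using has_derivative_fst[OF has_derivative_ident] by blast

lemma differentiable_snd [derivative_intros]: "snd differentiable F"
  unfolding differentiable_def using has_derivative_snd[OF has_derivative_ident] by blast

lemma pd_add:
  "u differentiable (at x) \<Longrightarrow> v differentiable (at x) \<Longrightarrow>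
    pd i (\<lambda>y. u y + v y) x = pd i u x + (pd i v x :: real)"
  by (simp add: pd_eq_derivative[OF has_derivative_add[OF has_frechet_derivative has_frechet_derivative]])
    (simp add: pd_def)

lemma pd_diff:
  "u differentiable (at x) \<Longrightarrow> v differentiable (at x) \<Longrightarrow>
    pd i (\<lambda>y. u y - v y) x = pd i u x - (pd i v x :: real)"
  by (simp add: pd_eq_derivative[OF has_derivative_diff[OF has_frechet_derivative has_frechet_derivative]])
    (simp add: pd_def)

lemma pd_mult:
  "u differentiable (at x) \<Longrightarrow> v differentiable (at x) \<Longrightarrow>
    pd i (\<lambda>y. u y * v y) x = pd i u x * v x + u x * (pd i v x :: real)"
  by (simp add: pd_eq_derivative[OF has_derivative_mult[OF has_frechet_derivative has_frechet_derivative]])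
    (simp add: pd_def)

lemma pd_minus: "u differentiable (at x) \<Longrightarrow> pd i (\<lambda>y. - u y) x = - (pd i u x :: real)"
  by (simp add: pd_eq_derivative[OF has_derivative_minus[OF has_frechet_derivative]]) (simp add: pd_def)

lemma pd_exp: "u differentiable (at x) \<Longrightarrow> pd i (\<lambda>y. exp (u y)) x = exp (u x) * (pd i u x :: real)"
  by (simp add: pd_eq_derivative[OF has_derivative_exp[OF has_frechet_derivative]]) (simp add: pd_def)

lemma pd_const: "pd i (\<lambda>y. c :: real) x = 0"
  by (simp add: pd_eq_derivative[OF has_derivative_const])

lemma pd_fst: "pd i fst x = fst (evec i)"
  by (simp add: pd_eq_derivative[OF has_derivative_fst[OF has_derivative_ident]])

lemma pd_snd: "pd i snd x = snd (evec i)"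
  by (simp add: pd_eq_derivative[OF has_derivative_snd[OF has_derivative_ident]])

lemmas pd_simps = pd_add pd_diff pd_mult pd_minus pd_exp pd_const pd_fst pd_snd evec_def

lemma constant_if_pd_eq_0:
  fixes u :: "real \<times> real \<Rightarrow> real"
  assumes "\<And>x. u differentiable (at x)" and "\<And>x. pd 1 u x = 0" and "\<And>x. pd 2 u x = 0"
  shows "\<exists>C. \<forall>x. u x = C"
proof -
  have "frechet_derivative u (at x) = (\<lambda>h. 0)" for x
  proof
    fix h :: "real \<times> real"
    have lin: "linear (frechet_derivative u (at x))"
      using assms(1) has_derivative_linear has_frechet_derivative by blast
    have "h = fst h *\<^sub>R evec 1 + snd h *\<^sub>R evec 2"
      by (simp add: evec_def prod_eq_iff)
    then have "frechet_derivative u (at x) h =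
        fst h * frechet_derivative u (at x) (evec 1) + snd h * frechet_derivative u (at x) (evec 2)"
      by (metis linear_add[OF lin] linear_scale[OF lin] real_scaleR_def)
    then show "frechet_derivative u (at x) h = 0"
      using assms(2,3) by (simp add: pd_def)
  qed
  then have "(u has_derivative (\<lambda>h. 0)) (at x within UNIV)" for x
    using has_frechet_derivative[OF assms(1)[of x]] by simp
  then show ?thesis
    using has_derivative_zero_constant[of UNIV u] by auto
qed

lemma mult_exp_eq_iff: "u * exp v = C \<longleftrightarrow> u = C * exp (- v :: real)"
  by (auto simp: exp_minus field_simps)

lemma eq_const_mult_exp_if_pd:
  fixes g h :: "real \<times> real \<Rightarrow> real"
  assumes "\<And>x. g differentiable (at x)" and "\<And>x. h differentiable (at x)"
    and "\<And>x. pd 1 g x = pd 1 h x * g x" and "\<And>x. pd 2 g x = pd 2 h x * g x"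
  shows "\<exists>C. \<forall>x. g x = C * exp (h x)"
proof -
  have "\<exists>C. \<forall>x. g x * exp (- h x) = C"
    by (rule constant_if_pd_eq_0) (use assms in \<open>auto simp: pd_simps derivative_intros\<close>)
  then show ?thesis
    by (simp add: mult_exp_eq_iff)
qed

lemma smooth2_differentiable:
  assumes "smooth2 u"
  shows "u differentiable (at x)" and "pd 1 u differentiable (at x)" and "pd 2 u differentiable (at x)"
proof -
  have "iter_pd [] u differentiable_on UNIV" "iter_pd [1] u differentiable_on UNIV"
      "iter_pd [2] u differentiable_on UNIV"
    using assms unfolding smooth2_def idx_def by auto
  then show "u differentiable (at x)" "pd 1 u differentiable (at x)" "pd 2 u differentiable (at x)"
    unfolding iter_pd_def by (simp_all add: differentiable_on_eq_differentiable_at del: split_paired_All)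
qed

lemma smooth2_span3:
  assumes "g \<in> span3 u v w"
    and "\<And>x. u differentiable (at x)" "\<And>x. v differentiable (at x)" "\<And>x. w differentiable (at x)"
    and "\<And>a b c. pd 1 (\<lambda>x. a * u x + b * v x + c * w x) \<in> span3 u v w"
    and "\<And>a b c. pd 2 (\<lambda>x. a * u x + b * v x + c * w x) \<in> span3 u v w"
  shows "smooth2 g"
proof -
  have pd_closed: "pd i h \<in> span3 u v w" if "i \<in> idx" "h \<in> span3 u v w" for i h
    using that assms(5,6) unfolding idx_def span3_def by auto
  have iter: "iter_pd is g \<in> span3 u v w" if "set is \<subseteq> idx" for "is"
    using that by (induction "is") (auto simp: iter_pd_def assms(1) pd_closed)
  have "h differentiable (at x)" if h: "h \<in> span3 u v w" for h x
  proof -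
    obtain a b c where "h = (\<lambda>x. a * u x + b * v x + c * w x)"
      using h by (auto simp: span3_def)
    then show ?thesis using assms(2-4) by simp
  qed
  then show ?thesis
    unfolding smooth2_def using iter by (simp add: differentiable_at_imp_differentiable_on)
qed

lemma Lmod_GammaA:
  "Lmod a1 a2 (GammaA a b c d e f) = GammaA (a + 2 * a1) b (c + a2) (d + a1) e (f + 2 * a2)"
  by (auto simp: fun_eq_iff Lmod_def GammaA_def lincoef_def kdelta_def idx_def)

lemma Lmod_zero: "Lmod 0 0 G = G"
  by (simp add: fun_eq_iff Lmod_def lincoef_def)

lemma flat_GammaA_iff:
  "flat (GammaA a b c d e f) \<longleftrightarrow>
     b * e = c * d \<and> a * d + b * f = b * c + d * d \<and> a * e + c * f = c * c + d * e"
  unfolding flat_def curv_def idx_def by (auto simp: GammaA_def algebra_simps)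

lemma square_neq_minus_one: "x * x \<noteq> (-1 :: real)"
  using zero_le_square[of x] by linarith

lemma add_square_eq_0_iff: "x + x * x = 0 \<longleftrightarrow> x = 0 \<or> x = (-1 :: real)"
proof -
  have "x + x * x = x * (x + 1)" by (simp add: algebra_simps)
  then show ?thesis by auto
qed

lemma flat_Lmod_Gamma0_cases:
  assumes "flat (Lmod a1 a2 (Gamma0 i))" and "i \<le> 5"
  shows "a1 = 0 \<and> a2 = 0 \<or> i = 1 \<and> a1 = -1 \<and> a2 = 0 \<or> i = 2 \<and> a1 = 1 \<and> a2 = 0
    \<or> i = 2 \<and> a1 = 0 \<and> a2 = -1 \<or> i = 3 \<and> a1 = 0 \<and> a2 = -1"
proof -
  have "i = 0 \<or> i = 1 \<or> i = 2 \<or> i = 3 \<or> i = 4 \<or> i = 5" using assms(2) by auto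
  then show ?thesis
    using assms(1) by (elim disjE)
      (auto simp: Gamma0_def Lmod_GammaA flat_GammaA_iff algebra_simps
        add_square_eq_0_iff square_neq_minus_one)
qed

lemma Qsp_flat_GammaA:
  assumes "flat (GammaA a b c d e f)"
  shows "u \<in> Qsp (GammaA a b c d e f) \<longleftrightarrow> smooth2 u \<and> (\<forall>x.
     pd 1 (pd 1 u) x = a * pd 1 u x + b * pd 2 u x \<and> pd 1 (pd 2 u) x = c * pd 1 u x + d * pd 2 u x \<and>
     pd 2 (pd 1 u) x = c * pd 1 u x + d * pd 2 u x \<and> pd 2 (pd 2 u) x = e * pd 1 u x + f * pd 2 u x)"
proof -
  have "ricci_s (GammaA a b c d e f) i j = 0" if "i \<in> idx" "j \<in> idx" for i j
    using assms that unfolding flat_def ricci_s_def ricci_def by simp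
  then show ?thesis
    unfolding Qsp_def by (simp add: idx_def GammaA_def)
qed

lemma Qsp_Lmod_Gamma0_1:
  "Qsp (Lmod (-1) 0 (Gamma0 1)) = span3 (\<lambda>(x1, x2). exp (- x1)) (\<lambda>_. 1) (\<lambda>(x1, x2). x2)"
    (is "_ = ?span")
proof -
  have Q: "u \<in> Qsp (Lmod (-1) 0 (Gamma0 1)) \<longleftrightarrow> smooth2 u \<and> (\<forall>x. pd 1 (pd 1 u) x = - pd 1 u x
      \<and> pd 1 (pd 2 u) x = 0 \<and> pd 2 (pd 1 u) x = 0 \<and> pd 2 (pd 2 u) x = 0)" for u
    by (simp add: Gamma0_def Lmod_GammaA Qsp_flat_GammaA flat_GammaA_iff)
  have span: "?span = span3 (\<lambda>x. exp (- fst x)) (\<lambda>_. 1) snd"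
    by (simp only: case_prod_beta')
  have pd_span:
    "pd 1 (\<lambda>x. a * exp (- fst x) + b * 1 + c * snd x) = (\<lambda>x. - a * exp (- fst x) + 0 * 1 + 0 * snd x)"
    "pd 2 (\<lambda>x. a * exp (- fst x) + b * 1 + c * snd x) = (\<lambda>x. 0 * exp (- fst x) + c * 1 + 0 * snd x)"
    for a b c
    by (simp_all add: fun_eq_iff pd_simps derivative_intros)
  show ?thesis
  proof (intro equalityI subsetI)
    fix u assume "u \<in> Qsp (Lmod (-1) 0 (Gamma0 1))"
    then have "smooth2 u" and hess: "\<And>x. pd 1 (pd 1 u) x = - pd 1 u x" "\<And>x. pd 1 (pd 2 u) x = 0"
      "\<And>x. pd 2 (pd 1 u) x = 0" "\<And>x. pd 2 (pd 2 u) x = 0"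
      unfolding Q by auto
    note diff = smooth2_differentiable[OF \<open>smooth2 u\<close>]
    obtain c where c: "\<And>x. pd 2 u x = c"
      using constant_if_pd_eq_0[OF diff(3)] hess by force
    have "\<exists>A. \<forall>x. pd 1 u x = A * exp (- fst x)"
      by (rule eq_const_mult_exp_if_pd) (use diff hess in \<open>auto simp: pd_simps derivative_intros\<close>)
    then obtain A where A: "\<And>x. pd 1 u x = A * exp (- fst x)" by blast
    have "\<exists>B. \<forall>x. u x + A * exp (- fst x) - c * snd x = B"
      by (rule constant_if_pd_eq_0) (use diff A c in \<open>auto simp: pd_simps derivative_intros\<close>)
    then obtain B where "\<And>x. u x + A * exp (- fst x) - c * snd x = B" by blast
    then have "u = (\<lambda>x. - A * exp (- fst x) + B * 1 + c * snd x)"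
      by (auto simp: fun_eq_iff algebra_simps)
    then show "u \<in> ?span"
      unfolding span unfolding span3_def by blast
  next
    fix u assume "u \<in> ?span"
    then obtain a b c where u: "u = (\<lambda>x. a * exp (- fst x) + b * 1 + c * snd x)"
      unfolding span unfolding span3_def by blast
    have "smooth2 u"
      using \<open>u \<in> ?span\<close> unfolding span
      by (rule smooth2_span3, unfold pd_span span3_def) (blast | simp add: derivative_intros)+
    then show "u \<in> Qsp (Lmod (-1) 0 (Gamma0 1))"
      unfolding Q u unfolding pd_span by simp
  qed
qed

lemma Qsp_Lmod_Gamma0_2_x1:
  "Qsp (Lmod 1 0 (Gamma0 2)) = span3 (\<lambda>(x1, x2). exp x1) (\<lambda>_. 1) (\<lambda>(x1, x2). exp (x2 + x1))"
    (is "_ = ?span")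
proof -
  have Q: "u \<in> Qsp (Lmod 1 0 (Gamma0 2)) \<longleftrightarrow> smooth2 u \<and> (\<forall>x. pd 1 (pd 1 u) x = pd 1 u x
      \<and> pd 1 (pd 2 u) x = pd 2 u x \<and> pd 2 (pd 1 u) x = pd 2 u x \<and> pd 2 (pd 2 u) x = pd 2 u x)" for u
    by (simp add: Gamma0_def Lmod_GammaA Qsp_flat_GammaA flat_GammaA_iff)
  have span: "?span = span3 (\<lambda>x. exp (fst x)) (\<lambda>_. 1) (\<lambda>x. exp (snd x + fst x))"
    by (simp only: case_prod_beta')
  have pd_span:
    "pd 1 (\<lambda>x. a * exp (fst x) + b * 1 + c * exp (snd x + fst x))
      = (\<lambda>x. a * exp (fst x) + 0 * 1 + c * exp (snd x + fst x))"
    "pd 2 (\<lambda>x. a * exp (fst x) + b * 1 + c * exp (snd x + fst x))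
      = (\<lambda>x. 0 * exp (fst x) + 0 * 1 + c * exp (snd x + fst x))"
    for a b c
    by (simp_all add: fun_eq_iff pd_simps derivative_intros)
  show ?thesis
  proof (intro equalityI subsetI)
    fix u assume "u \<in> Qsp (Lmod 1 0 (Gamma0 2))"
    then have "smooth2 u" and hess: "\<And>x. pd 1 (pd 1 u) x = pd 1 u x" "\<And>x. pd 1 (pd 2 u) x = pd 2 u x"
      "\<And>x. pd 2 (pd 1 u) x = pd 2 u x" "\<And>x. pd 2 (pd 2 u) x = pd 2 u x"
      unfolding Q by auto
    note diff = smooth2_differentiable[OF \<open>smooth2 u\<close>]
    have "\<exists>c. \<forall>x. pd 2 u x = c * exp (snd x + fst x)"
      by (rule eq_const_mult_exp_if_pd) (use diff hess in \<open>auto simp: pd_simps derivative_intros\<close>)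
    then obtain c where c: "\<And>x. pd 2 u x = c * exp (snd x + fst x)" by blast
    have "\<exists>A. \<forall>x. pd 1 u x - pd 2 u x = A * exp (fst x)"
      by (rule eq_const_mult_exp_if_pd) (use diff hess in \<open>auto simp: pd_simps derivative_intros\<close>)
    then obtain A where "\<And>x. pd 1 u x - pd 2 u x = A * exp (fst x)" by blast
    with c have A: "\<And>x. pd 1 u x = A * exp (fst x) + c * exp (snd x + fst x)"
      by (metis add.commute diff_eq_eq)
    have "\<exists>B. \<forall>x. u x - A * exp (fst x) - c * exp (snd x + fst x) = B"
      by (rule constant_if_pd_eq_0) (use diff A c in \<open>auto simp: pd_simps derivative_intros\<close>)
    then obtain B where "\<And>x. u x - A * exp (fst x) - c * exp (snd x + fst x) = B" by blast
    then have "u = (\<lambda>x. A * exp (fst x) + B * 1 + c * exp (snd x + fst x))"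
      by (auto simp: fun_eq_iff algebra_simps)
    then show "u \<in> ?span"
      unfolding span unfolding span3_def by blast
  next
    fix u assume "u \<in> ?span"
    then obtain a b c where u: "u = (\<lambda>x. a * exp (fst x) + b * 1 + c * exp (snd x + fst x))"
      unfolding span unfolding span3_def by blast
    have "smooth2 u"
      using \<open>u \<in> ?span\<close> unfolding span
      by (rule smooth2_span3, unfold pd_span span3_def) (blast | simp add: derivative_intros)+
    then show "u \<in> Qsp (Lmod 1 0 (Gamma0 2))"
      unfolding Q u unfolding pd_span by simp
  qed
qed

lemma Qsp_Lmod_Gamma0_2_x2:
  "Qsp (Lmod 0 (-1) (Gamma0 2)) = span3 (\<lambda>(x1, x2). exp (- x2)) (\<lambda>(x1, x2). exp (- x1 - x2)) (\<lambda>_. 1)"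
    (is "_ = ?span")
proof -
  have Q: "u \<in> Qsp (Lmod 0 (-1) (Gamma0 2)) \<longleftrightarrow> smooth2 u \<and> (\<forall>x. pd 1 (pd 1 u) x = - pd 1 u x
      \<and> pd 1 (pd 2 u) x = - pd 1 u x \<and> pd 2 (pd 1 u) x = - pd 1 u x \<and> pd 2 (pd 2 u) x = - pd 2 u x)" for u
    by (simp add: Gamma0_def Lmod_GammaA Qsp_flat_GammaA flat_GammaA_iff)
  have span: "?span = span3 (\<lambda>x. exp (- snd x)) (\<lambda>x. exp (- fst x - snd x)) (\<lambda>_. 1)"
    by (simp only: case_prod_beta')
  have pd_span:
    "pd 1 (\<lambda>x. a * exp (- snd x) + b * exp (- fst x - snd x) + c * 1)
      = (\<lambda>x. 0 * exp (- snd x) + - b * exp (- fst x - snd x) + 0 * 1)"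
    "pd 2 (\<lambda>x. a * exp (- snd x) + b * exp (- fst x - snd x) + c * 1)
      = (\<lambda>x. - a * exp (- snd x) + - b * exp (- fst x - snd x) + 0 * 1)"
    for a b c
    by (simp_all add: fun_eq_iff pd_simps derivative_intros)
  show ?thesis
  proof (intro equalityI subsetI)
    fix u assume "u \<in> Qsp (Lmod 0 (-1) (Gamma0 2))"
    then have "smooth2 u" and hess: "\<And>x. pd 1 (pd 1 u) x = - pd 1 u x" "\<And>x. pd 1 (pd 2 u) x = - pd 1 u x"
      "\<And>x. pd 2 (pd 1 u) x = - pd 1 u x" "\<And>x. pd 2 (pd 2 u) x = - pd 2 u x"
      unfolding Q by auto
    note diff = smooth2_differentiable[OF \<open>smooth2 u\<close>]
    have "\<exists>K. \<forall>x. pd 1 u x = K * exp (- fst x - snd x)"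
      by (rule eq_const_mult_exp_if_pd) (use diff hess in \<open>auto simp: pd_simps derivative_intros\<close>)
    then obtain K where K: "\<And>x. pd 1 u x = K * exp (- fst x - snd x)" by blast
    have "\<exists>M. \<forall>x. pd 2 u x - pd 1 u x = M * exp (- snd x)"
      by (rule eq_const_mult_exp_if_pd) (use diff hess in \<open>auto simp: pd_simps derivative_intros\<close>)
    then obtain M where "\<And>x. pd 2 u x - pd 1 u x = M * exp (- snd x)" by blast
    with K have M: "\<And>x. pd 2 u x = M * exp (- snd x) + K * exp (- fst x - snd x)"
      by (metis add.commute diff_eq_eq)
    have "\<exists>B. \<forall>x. u x + K * exp (- fst x - snd x) + M * exp (- snd x) = B"
      by (rule constant_if_pd_eq_0) (use diff K M in \<open>auto simp: pd_simps derivative_intros\<close>)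
    then obtain B where "\<And>x. u x + K * exp (- fst x - snd x) + M * exp (- snd x) = B" by blast
    then have "u = (\<lambda>x. - M * exp (- snd x) + - K * exp (- fst x - snd x) + B * 1)"
      by (auto simp: fun_eq_iff algebra_simps)
    then show "u \<in> ?span"
      unfolding span unfolding span3_def by blast
  next
    fix u assume "u \<in> ?span"
    then obtain a b c where u: "u = (\<lambda>x. a * exp (- snd x) + b * exp (- fst x - snd x) + c * 1)"
      unfolding span unfolding span3_def by blast
    have "smooth2 u"
      using \<open>u \<in> ?span\<close> unfolding span
      by (rule smooth2_span3, unfold pd_span span3_def) (blast | simp add: derivative_intros)+
    then show "u \<in> Qsp (Lmod 0 (-1) (Gamma0 2))"
      unfolding Q u unfolding pd_span by simp
  qed
qed

lemma Qsp_Lmod_Gamma0_3: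
  "Qsp (Lmod 0 (-1) (Gamma0 3)) = span3 (\<lambda>(x1, x2). exp (- x2)) (\<lambda>(x1, x2). x1 * exp (- x2)) (\<lambda>_. 1)"
    (is "_ = ?span")
proof -
  have Q: "u \<in> Qsp (Lmod 0 (-1) (Gamma0 3)) \<longleftrightarrow> smooth2 u \<and> (\<forall>x. pd 1 (pd 1 u) x = 0
      \<and> pd 1 (pd 2 u) x = - pd 1 u x \<and> pd 2 (pd 1 u) x = - pd 1 u x \<and> pd 2 (pd 2 u) x = - pd 2 u x)" for u
    by (simp add: Gamma0_def Lmod_GammaA Qsp_flat_GammaA flat_GammaA_iff)
  have span: "?span = span3 (\<lambda>x. exp (- snd x)) (\<lambda>x. fst x * exp (- snd x)) (\<lambda>_. 1)"
    by (simp only: case_prod_beta')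
  have pd_span:
    "pd 1 (\<lambda>x. a * exp (- snd x) + b * (fst x * exp (- snd x)) + c * 1)
      = (\<lambda>x. b * exp (- snd x) + 0 * (fst x * exp (- snd x)) + 0 * 1)"
    "pd 2 (\<lambda>x. a * exp (- snd x) + b * (fst x * exp (- snd x)) + c * 1)
      = (\<lambda>x. - a * exp (- snd x) + - b * (fst x * exp (- snd x)) + 0 * 1)"
    for a b c
    by (simp_all add: fun_eq_iff pd_simps derivative_intros)
  show ?thesis
  proof (intro equalityI subsetI)
    fix u assume "u \<in> Qsp (Lmod 0 (-1) (Gamma0 3))"
    then have "smooth2 u" and hess: "\<And>x. pd 1 (pd 1 u) x = 0" "\<And>x. pd 1 (pd 2 u) x = - pd 1 u x"
      "\<And>x. pd 2 (pd 1 u) x = - pd 1 u x" "\<And>x. pd 2 (pd 2 u) x = - pd 2 u x"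
      unfolding Q by auto
    note diff = smooth2_differentiable[OF \<open>smooth2 u\<close>]
    have "\<exists>K. \<forall>x. pd 1 u x = K * exp (- snd x)"
      by (rule eq_const_mult_exp_if_pd) (use diff hess in \<open>auto simp: pd_simps derivative_intros\<close>)
    then obtain K where K: "\<And>x. pd 1 u x = K * exp (- snd x)" by blast
    have "\<exists>M. \<forall>x. pd 2 u x + K * (fst x * exp (- snd x)) = M * exp (- snd x)"
      by (rule eq_const_mult_exp_if_pd)
        (use diff hess K in \<open>auto simp: pd_simps derivative_intros algebra_simps\<close>)
    then obtain M where "\<And>x. pd 2 u x + K * (fst x * exp (- snd x)) = M * exp (- snd x)" by blast
    then have M: "\<And>x. pd 2 u x = M * exp (- snd x) - K * (fst x * exp (- snd x))"
      by (metis eq_diff_eq)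
    have "\<exists>B. \<forall>x. u x - K * (fst x * exp (- snd x)) + M * exp (- snd x) = B"
      by (rule constant_if_pd_eq_0) (use diff K M in \<open>auto simp: pd_simps derivative_intros\<close>)
    then obtain B where "\<And>x. u x - K * (fst x * exp (- snd x)) + M * exp (- snd x) = B" by blast
    then have "u = (\<lambda>x. - M * exp (- snd x) + K * (fst x * exp (- snd x)) + B * 1)"
      by (auto simp: fun_eq_iff algebra_simps)
    then show "u \<in> ?span"
      unfolding span unfolding span3_def by blast
  next
    fix u assume "u \<in> ?span"
    then obtain a b c where u: "u = (\<lambda>x. a * exp (- snd x) + b * (fst x * exp (- snd x)) + c * 1)"
      unfolding span unfolding span3_def by blast
    have "smooth2 u"
      using \<open>u \<in> ?span\<close> unfolding span
      by (rule smooth2_span3, unfold pd_span span3_def) (blast | simp add: derivative_intros)+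
    then show "u \<in> Qsp (Lmod 0 (-1) (Gamma0 3))"
      unfolding Q u unfolding pd_span by simp
  qed
qed

lemma sum_idx: "(\<Sum>k\<in>idx. F k) = F 1 + (F 2 :: real)"
  by (simp add: idx_def)

lemma ball_idx: "(\<forall>k\<in>idx. P k) \<longleftrightarrow> P 1 \<and> P 2"
  by (simp add: idx_def)

definition mat2 :: "real \<Rightarrow> real \<Rightarrow> real \<Rightarrow> real \<Rightarrow> nat \<Rightarrow> nat \<Rightarrow> real" where
  "mat2 p q r s a i = (if a = 1 then if i = 1 then p else q else if i = 1 then r else s)"

lemma intertwines_Lmod_Gamma0_1:
  "intertwines (\<lambda>(x1, x2). (x2, - x1)) (Lmod (-1) 0 (Gamma0 1)) (Gamma0 3)"
  unfolding intertwines_def Gamma0_def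
  by (rule exI[of _ "mat2 0 1 (-1) 0"])
    (simp add: Lmod_GammaA mat2_def sum_idx ball_idx GammaA_def)

lemma intertwines_Lmod_Gamma0_2_x1:
  "intertwines (\<lambda>(x1, x2). (- x1, x1 + x2)) (Lmod 1 0 (Gamma0 2)) (Gamma0 2)"
  unfolding intertwines_def Gamma0_def
  by (rule exI[of _ "mat2 (-1) 0 1 1"])
    (simp add: Lmod_GammaA mat2_def sum_idx ball_idx GammaA_def)

lemma intertwines_Lmod_Gamma0_2_x2:
  "intertwines (\<lambda>(x1, x2). (x2, - x1 - x2)) (Lmod 0 (-1) (Gamma0 2)) (Gamma0 2)"
  unfolding intertwines_def Gamma0_def
  by (rule exI[of _ "mat2 0 1 (-1) (-1)"])
    (simp add: Lmod_GammaA mat2_def sum_idx ball_idx GammaA_def)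

lemma intertwines_Lmod_Gamma0_3:
  "intertwines (\<lambda>(x1, x2). (- x2, x1)) (Lmod 0 (-1) (Gamma0 3)) (Gamma0 1)"
  unfolding intertwines_def Gamma0_def
  by (rule exI[of _ "mat2 0 (-1) 1 0"])
    (simp add: Lmod_GammaA mat2_def sum_idx ball_idx GammaA_def)

theorem theorem3p3:
  fixes a b c d e f :: real and i :: nat
  defines "G \<equiv> GammaA a b c d e f"
  assumes "flat G"
    and "i \<le> 5"
    and "\<exists>a1 a2. G = Lmod a1 a2 (Gamma0 i)"
  shows "G = Gamma0 i
    \<or> (i = 1 \<and> Qsp G = span3 (\<lambda>(x1, x2). exp (- x1)) (\<lambda>_. 1) (\<lambda>(x1, x2). x2)
        \<and> intertwines (\<lambda>(x1, x2). (x2, - x1)) G (Gamma0 3))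
    \<or> (i = 2 \<and> Qsp G = span3 (\<lambda>(x1, x2). exp x1) (\<lambda>_. 1) (\<lambda>(x1, x2). exp (x2 + x1))
        \<and> intertwines (\<lambda>(x1, x2). (- x1, x1 + x2)) G (Gamma0 2))
    \<or> (i = 2 \<and> Qsp G = span3 (\<lambda>(x1, x2). exp (- x2)) (\<lambda>(x1, x2). exp (- x1 - x2)) (\<lambda>_. 1)
        \<and> intertwines (\<lambda>(x1, x2). (x2, - x1 - x2)) G (Gamma0 2))
    \<or> (i = 3 \<and> Qsp G = span3 (\<lambda>(x1, x2). exp (- x2)) (\<lambda>(x1, x2). x1 * exp (- x2)) (\<lambda>_. 1)
        \<and> intertwines (\<lambda>(x1, x2). (- x2, x1)) G (Gamma0 1))"
proof -
  obtain a1 a2 where G: "G = Lmod a1 a2 (Gamma0 i)"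
    using assms(4) by blast
  from flat_Lmod_Gamma0_cases[OF assms(2)[unfolded G] assms(3)] show ?thesis
  proof (elim disjE conjE)
    assume "a1 = 0" "a2 = 0"
    then show ?thesis unfolding G by (simp add: Lmod_zero)
  next
    assume "i = 1" "a1 = -1" "a2 = 0"
    then show ?thesis unfolding G using Qsp_Lmod_Gamma0_1 intertwines_Lmod_Gamma0_1 by blast
  next
    assume "i = 2" "a1 = 1" "a2 = 0"
    then show ?thesis unfolding G using Qsp_Lmod_Gamma0_2_x1 intertwines_Lmod_Gamma0_2_x1 by blast
  next
    assume "i = 2" "a1 = 0" "a2 = -1"
    then show ?thesis unfolding G using Qsp_Lmod_Gamma0_2_x2 intertwines_Lmod_Gamma0_2_x2 by blast
  next
    assume "i = 3" "a1 = 0" "a2 = -1"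
    then show ?thesis unfolding G using Qsp_Lmod_Gamma0_3 intertwines_Lmod_Gamma0_3 by blast
  qed
qed

end
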